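(* Let $\epsilon>0$ be a constant and let the input graph have $n$ vertices. In any call to ContractLayer, within each outer round there are at most $O(\log n)$ inner rounds, with high probability.
   Context: Setting: an undirected graph $G=(V,E,w)$ with $n$ vertices and positive edge weights. A partition of $V$ into clusters is maintained (initially singletons), together with the cluster graph $H$ whose vertices are the clusters, with an edge between clusters $X\neq Y$ iff $G$ has an edge between them, of average-linkage weight $\mathcal{W}(X,Y)=\sum_{(x,y)\in E,\,x\in X,\,y\in Y} w(x,y)/(|X||Y|)$. The size $|X|$ of a vertex of $H$ is the size of its cluster; merging means replacing two clusters by their union. ContractLayer$(H,T_L,\epsilon)$: while the maximum edge weight of $H$ is at least $T_L$, perform an outer round: color each non-isolated vertex of $H$ red or blue independently with probability $1/2$ each; let $G_c$ consist of the edges of $H$ of weight $\ge T_L$ joining a blue vertex $x$ to a red vertex $y$ with $|y|\ge|x|$. While $G_c$ has edges, perform an inner round: each blue vertex $b$ picks an independent uniform priority $\pi_b\in[0,1]$ and a uniformly random red neighbor $C_b$ in $G_c$ (blue vertices with no red neighbor in $G_c$ do nothing); for each red $r$, order the blue vertices proposing to $r$ by priority and select the shortest prefix whose total cluster size exceeds $\epsilon|r|$ (all of them if no prefix does); merge every selected blue vertex into its red vertex, updating all edge weights of $H$ and $G_c$ exactly; then remove from $G_c$ every edge with two red endpoints or weight below $T_L$, and remove from $G_c$ every red vertex whose cluster size has grown by more than a factor $(1+\epsilon)$ since the start of the outer round. "With high probability" means: for every constant $k$, the bound holds (with constant depending on $k$) with probability at least $1-n^{-k}$. *)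

theory Defs
  imports "HOL-Probability.Probability" "HOL-Combinatorics.Multiset_Permutations"
begin

(* Vertices of G are 0..<n.  Weights: w :: nat => nat => real, symmetric, nonnegative,
   w x y > 0 iff {x,y} is an edge of G (weight w x y), w x y = 0 for non-edges.
   A partition of V into clusters is given by a labelling rep :: nat => nat; the cluster
   with label a is {v<n. rep v = a}.  Labels of red clusters persist under merging. *)

type_synonym labeling = "nat \<Rightarrow> nat"
type_synonym cstate = "labeling \<times> (nat \<times> nat) set"  (* (labelling, edge set of G_c as (blue,red) pairs) *)

definition cl :: "nat \<Rightarrow> labeling \<Rightarrow> nat \<Rightarrow> nat set" where
  "cl n rep a = {v. v < n \<and> rep v = a}"

definition csize :: "nat \<Rightarrow> labeling \<Rightarrow> nat \<Rightarrow> nat" where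
  "csize n rep a = card (cl n rep a)"

definition W :: "nat \<Rightarrow> (nat \<Rightarrow> nat \<Rightarrow> real) \<Rightarrow> labeling \<Rightarrow> nat \<Rightarrow> nat \<Rightarrow> real" where
  "W n w rep a c =
     (\<Sum>x\<in>cl n rep a. \<Sum>y\<in>cl n rep c. w x y) / (real (csize n rep a) * real (csize n rep c))"

definition H_edge :: "nat \<Rightarrow> (nat \<Rightarrow> nat \<Rightarrow> real) \<Rightarrow> labeling \<Rightarrow> nat \<Rightarrow> nat \<Rightarrow> bool" where
  "H_edge n w rep a c \<longleftrightarrow> a \<noteq> c \<and> (\<exists>x\<in>cl n rep a. \<exists>y\<in>cl n rep c. w x y > 0)"

definition nonisolated :: "nat \<Rightarrow> (nat \<Rightarrow> nat \<Rightarrow> real) \<Rightarrow> labeling \<Rightarrow> nat set" where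
  "nonisolated n w rep = {a. \<exists>c. H_edge n w rep a c}"

(* random colouring of the non-isolated vertices: True = red, False = blue,
   independently with probability 1/2 (the default value outside the non-isolated
   vertices is irrelevant since those have no edges) *)
definition colouring :: "nat \<Rightarrow> (nat \<Rightarrow> nat \<Rightarrow> real) \<Rightarrow> labeling \<Rightarrow> (nat \<Rightarrow> bool) pmf" where
  "colouring n w rep = Pi_pmf (nonisolated n w rep) False (\<lambda>_. bernoulli_pmf (1/2))"

definition Gc0 :: "nat \<Rightarrow> (nat \<Rightarrow> nat \<Rightarrow> real) \<Rightarrow> labeling \<Rightarrow> real \<Rightarrow> (nat \<Rightarrow> bool) \<Rightarrow> (nat \<times> nat) set" where
  "Gc0 n w rep T col = {(b, r). H_edge n w rep b r \<and> W n w rep b r \<ge> T \<and> \<not> col b \<and> col r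
                                \<and> csize n rep r \<ge> csize n rep b}"

fun sel_prefix :: "(nat \<Rightarrow> real) \<Rightarrow> real \<Rightarrow> real \<Rightarrow> nat list \<Rightarrow> nat list" where
  "sel_prefix sz thr acc [] = []"
| "sel_prefix sz thr acc (b # bs) =
     (if acc + sz b > thr then [b] else b # sel_prefix sz thr (acc + sz b) bs)"

(* One inner round.  s0 = cluster sizes at the start of the outer round.
   Priorities: uniformly random order of the blue vertices. *)
definition inner_step ::
  "nat \<Rightarrow> (nat \<Rightarrow> nat \<Rightarrow> real) \<Rightarrow> real \<Rightarrow> real \<Rightarrow> (nat \<Rightarrow> nat) \<Rightarrow> cstate \<Rightarrow> cstate pmf" where
  "inner_step n w T eps s0 st =
    (let rep = fst st; Gc = snd st; B = fst ` Gc; nbr = (\<lambda>b. {r. (b, r) \<in> Gc}) in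
     if Gc = {} then return_pmf st else
     bind_pmf (pmf_of_set (permutations_of_set B)) (\<lambda>order.
     bind_pmf (Pi_pmf B 0 (\<lambda>b. pmf_of_set (nbr b))) (\<lambda>choice.
       let sz = (\<lambda>a. real (csize n rep a));
           selected = (\<lambda>r. set (sel_prefix sz (eps * sz r) 0 (filter (\<lambda>b. choice b = r) order)));
           merged = {b \<in> B. b \<in> selected (choice b)};
           rep' = (\<lambda>v. if rep v \<in> merged then choice (rep v) else rep v);
           Gc' = {(b, r) \<in> Gc. b \<notin> merged \<and> W n w rep' b r \<ge> T
                               \<and> real (csize n rep' r) \<le> (1 + eps) * real (s0 r)}
       in return_pmf (rep', Gc'))))"

fun inner_iter ::
  "nat \<Rightarrow> (nat \<Rightarrow> nat \<Rightarrow> real) \<Rightarrow> real \<Rightarrow> real \<Rightarrow> (nat \<Rightarrow> nat) \<Rightarrow> nat \<Rightarrow> cstate \<Rightarrow> cstate pmf" where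
  "inner_iter n w T eps s0 0 st = return_pmf st"
| "inner_iter n w T eps s0 (Suc m) st = bind_pmf (inner_step n w T eps s0 st) (inner_iter n w T eps s0 m)"

definition outer_round_after ::
  "nat \<Rightarrow> (nat \<Rightarrow> nat \<Rightarrow> real) \<Rightarrow> real \<Rightarrow> real \<Rightarrow> labeling \<Rightarrow> nat \<Rightarrow> cstate pmf" where
  "outer_round_after n w T eps rep m =
     bind_pmf (colouring n w rep)
       (\<lambda>col. inner_iter n w T eps (csize n rep) m (rep, Gc0 n w rep T col))"

(* more than m inner rounds happen iff G_c is still nonempty after m inner rounds *)
definition more_than_inner_rounds ::
  "nat \<Rightarrow> (nat \<Rightarrow> nat \<Rightarrow> real) \<Rightarrow> real \<Rightarrow> real \<Rightarrow> labeling \<Rightarrow> nat \<Rightarrow> real" where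
  "more_than_inner_rounds n w T eps rep m =
     measure_pmf.prob (outer_round_after n w T eps rep m) {st. snd st \<noteq> {}}"

end

theory Submission
  imports Defs
begin

(* Fix an inner round and a blue vertex b of degree d in G_c.  Call a red neighbour r crowded if
   the other blue vertices proposing to r already have total size above eps |r|; this does not
   depend on the proposal of b.  If b is not merged, its proposal is crowded; and a crowded red
   vertex grows by more than the factor 1 + eps, so it leaves G_c.  Hence b keeps at most
   [proposal of b crowded] * #(uncrowded neighbours) edges, whose expectation over the uniform
   proposal of b is a (d - a) / d <= d / 4, where a is the number of crowded neighbours.  So the
   expected number of edges of G_c drops by a factor 4 per inner round, and by Markov's inequality
   G_c is nonempty after m inner rounds with probability at most n^2 4^(-m). *)

lemma nn_integral_Pi_pmf_coordinate:
  assumes "finite B" "b \<in> B"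
  shows "(\<integral>\<^sup>+f. g f \<partial>Pi_pmf B d p) = (\<integral>\<^sup>+f. \<integral>\<^sup>+y. g (f(b := y)) \<partial>p b \<partial>Pi_pmf (B - {b}) d p)"
proof -
  have "Pi_pmf B d p = map_pmf (\<lambda>(y, f). f(b := y)) (pair_pmf (p b) (Pi_pmf (B - {b}) d p))"
    using assms Pi_pmf_insert[of "B - {b}" b d p] by (simp add: insert_absorb)
  also have "\<dots> = map_pmf (\<lambda>(f, y). f(b := y)) (pair_pmf (Pi_pmf (B - {b}) d p) (p b))"
    by (subst pair_commute_pmf) (simp add: pmf.map_comp o_def case_prod_unfold)
  finally show ?thesis by (simp add: nn_integral_pair_pmf')
qed

lemma nn_integral_pmf_of_set_hits_times_misses:
  assumes "finite S" "S \<noteq> {}"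
  shows "(\<integral>\<^sup>+y. of_nat (if E y then card {r\<in>S. \<not> E r} else 0) \<partial>pmf_of_set S)
         \<le> ennreal (real (card S) / 4)"
proof -
  define a where "a = card {r\<in>S. E r}"
  define d where "d = card S"
  have "a \<le> d" "0 < d"
    unfolding a_def d_def using assms by (auto intro: card_mono simp: card_gt_0_iff)
  have misses: "card {r\<in>S. \<not> E r} = d - a"
  proof -
    have "{r\<in>S. \<not> E r} = S - {r\<in>S. E r}" by blast
    then show ?thesis unfolding a_def d_def using assms(1) by (simp add: card_Diff_subset)
  qed
  have "(\<integral>\<^sup>+y. of_nat (if E y then card {r\<in>S. \<not> E r} else 0) \<partial>pmf_of_set S)
      = (\<Sum>y\<in>S. of_nat (if E y then d - a else 0)) / of_nat d"
    unfolding misses d_def by (rule nn_integral_pmf_of_set[OF assms(2,1)])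
  also have "(\<Sum>y\<in>S. of_nat (if E y then d - a else 0)) = (of_nat (a * (d - a)) :: ennreal)"
    unfolding a_def using assms(1) by (simp add: sum.If_cases Int_def if_distrib[of of_nat])
  also have "of_nat (a * (d - a)) / of_nat d = ennreal (real (a * (d - a)) / real d)"
    using \<open>0 < d\<close> by (simp add: ennreal_of_nat_eq_real_of_nat divide_ennreal)
  also have "\<dots> \<le> ennreal (real d / 4)"
  proof (rule ennreal_leI)
    have "0 \<le> (real d - 2 * real a)\<^sup>2" by simp
    then have "4 * (real a * (real d - real a)) \<le> real d * real d"
      by (simp add: power2_eq_square algebra_simps)
    then show "real (a * (d - a)) / real d \<le> real d / 4"
      using \<open>a \<le> d\<close> \<open>0 < d\<close> by (simp add: field_simps)
  qed
  finally show ?thesis unfolding d_def .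
qed

lemma nn_integral_Pi_pmf_hits_times_misses:
  assumes "finite B" "b \<in> B" "finite S" "S \<noteq> {}" "p b = pmf_of_set S"
    and E_indep: "\<And>f y r. E (f(b := y)) r = E f r"
  shows "(\<integral>\<^sup>+f. of_nat (if E f (f b) then card {r\<in>S. \<not> E f r} else 0) \<partial>Pi_pmf B d p)
         \<le> ennreal (real (card S) / 4)"
proof -
  have "(\<integral>\<^sup>+f. of_nat (if E f (f b) then card {r\<in>S. \<not> E f r} else 0) \<partial>Pi_pmf B d p)
      = (\<integral>\<^sup>+f. \<integral>\<^sup>+y. of_nat (if E f y then card {r\<in>S. \<not> E f r} else 0) \<partial>pmf_of_set S \<partial>Pi_pmf (B - {b}) d p)"
    using assms(1,2,5) by (simp add: nn_integral_Pi_pmf_coordinate E_indep cong: if_cong)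
  also have "\<dots> \<le> (\<integral>\<^sup>+f. ennreal (real (card S) / 4) \<partial>Pi_pmf (B - {b}) d p)"
    by (intro nn_integral_mono nn_integral_pmf_of_set_hits_times_misses assms(3,4))
  finally show ?thesis by simp
qed

lemma finite_row: "finite G \<Longrightarrow> finite {r. (b, r) \<in> G}"
  by (rule finite_subset[OF _ finite_imageI[of G snd]]) force

lemma card_eq_sum_rows:
  assumes "finite G" "finite B" "fst ` G \<subseteq> B"
  shows "card G = (\<Sum>b\<in>B. card {r. (b, r) \<in> G})"
proof -
  have "card (SIGMA b:B. {r. (b, r) \<in> G}) = (\<Sum>b\<in>B. card {r. (b, r) \<in> G})"
    using assms(2) finite_row[OF assms(1)] by simp
  moreover have "(SIGMA b:B. {r. (b, r) \<in> G}) = G" using assms(3) by force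
  ultimately show ?thesis by simp
qed

lemma sel_prefix_subset: "set (sel_prefix sz thr acc L) \<subseteq> set L"
  by (induction L arbitrary: acc) auto

lemma distinct_sel_prefix: "distinct L \<Longrightarrow> distinct (sel_prefix sz thr acc L)"
  by (induction L arbitrary: acc) (use sel_prefix_subset in fastforce)+

lemma sel_prefix_exceeds:
  "thr < acc + sum_list (map sz L) \<Longrightarrow> thr < acc + sum_list (map sz (sel_prefix sz thr acc L))"
proof (induction L arbitrary: acc)
  case (Cons a L)
  then show ?case
    using Cons.IH[of "acc + sz a"] by (simp add: add.assoc)
qed simp

lemma sel_prefix_exceeds_if_not_selected:
  "b \<in> set L \<Longrightarrow> b \<notin> set (sel_prefix sz thr acc L) \<Longrightarrow>
   thr < acc + sum_list (map sz (sel_prefix sz thr acc L))"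
proof (induction L arbitrary: acc)
  case (Cons a L)
  then show ?case
    using Cons.IH[of "acc + sz a"] by (auto simp: add.assoc)
qed simp

definition selected_blues :: "nat \<Rightarrow> real \<Rightarrow> labeling \<Rightarrow> nat list \<Rightarrow> (nat \<Rightarrow> nat) \<Rightarrow> nat \<Rightarrow> nat list" where
  "selected_blues n eps rep prio choice r =
     sel_prefix (\<lambda>a. real (csize n rep a)) (eps * real (csize n rep r)) 0 (filter (\<lambda>b. choice b = r) prio)"

definition merged_blues ::
  "nat \<Rightarrow> real \<Rightarrow> labeling \<Rightarrow> (nat \<times> nat) set \<Rightarrow> nat list \<Rightarrow> (nat \<Rightarrow> nat) \<Rightarrow> nat set" where
  "merged_blues n eps rep Gc prio choice =
     {b \<in> fst ` Gc. b \<in> set (selected_blues n eps rep prio choice (choice b))}"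

definition merged_labeling ::
  "nat \<Rightarrow> real \<Rightarrow> labeling \<Rightarrow> (nat \<times> nat) set \<Rightarrow> nat list \<Rightarrow> (nat \<Rightarrow> nat) \<Rightarrow> labeling" where
  "merged_labeling n eps rep Gc prio choice =
     (\<lambda>v. if rep v \<in> merged_blues n eps rep Gc prio choice then choice (rep v) else rep v)"

definition next_Gc :: "nat \<Rightarrow> (nat \<Rightarrow> nat \<Rightarrow> real) \<Rightarrow> real \<Rightarrow> real \<Rightarrow> (nat \<Rightarrow> nat) \<Rightarrow> labeling \<Rightarrow>
    (nat \<times> nat) set \<Rightarrow> nat list \<Rightarrow> (nat \<Rightarrow> nat) \<Rightarrow> (nat \<times> nat) set" where
  "next_Gc n w T eps s0 rep Gc prio choice =
     {(b, r) \<in> Gc. b \<notin> merged_blues n eps rep Gc prio choice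
        \<and> T \<le> W n w (merged_labeling n eps rep Gc prio choice) b r
        \<and> real (csize n (merged_labeling n eps rep Gc prio choice) r) \<le> (1 + eps) * real (s0 r)}"

definition crowded ::
  "nat \<Rightarrow> real \<Rightarrow> labeling \<Rightarrow> (nat \<times> nat) set \<Rightarrow> nat \<Rightarrow> (nat \<Rightarrow> nat) \<Rightarrow> nat \<Rightarrow> bool" where
  "crowded n eps rep Gc b choice r \<longleftrightarrow>
     eps * real (csize n rep r) < (\<Sum>b'\<in>{b'\<in>fst ` Gc - {b}. choice b' = r}. real (csize n rep b'))"

lemma crowded_fun_upd [simp]:
  "crowded n eps rep Gc b (choice(b := y)) r = crowded n eps rep Gc b choice r"
proof -
  have "{b'\<in>fst ` Gc - {b}. (choice(b := y)) b' = r} = {b'\<in>fst ` Gc - {b}. choice b' = r}" by auto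
  then show ?thesis unfolding crowded_def by simp
qed

lemma inner_step_nonempty:
  assumes "Gc \<noteq> {}"
  shows "inner_step n w T eps s0 (rep, Gc) =
    bind_pmf (pmf_of_set (permutations_of_set (fst ` Gc))) (\<lambda>prio.
    bind_pmf (Pi_pmf (fst ` Gc) 0 (\<lambda>b. pmf_of_set {r. (b, r) \<in> Gc})) (\<lambda>choice.
      return_pmf (merged_labeling n eps rep Gc prio choice, next_Gc n w T eps s0 rep Gc prio choice)))"
  using assms unfolding inner_step_def Let_def prod.sel next_Gc_def merged_labeling_def merged_blues_def
    selected_blues_def by simp

lemma next_Gc_subset: "next_Gc n w T eps s0 rep Gc prio choice \<subseteq> Gc"
  unfolding next_Gc_def by auto

lemma finite_cl: "finite (cl n rep a)"
  unfolding cl_def by auto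

lemma cl_disjoint: "a \<noteq> c \<Longrightarrow> cl n rep a \<inter> cl n rep c = {}"
  unfolding cl_def by auto

context
  fixes n :: nat and eps :: real and rep :: labeling and Gc :: "(nat \<times> nat) set"
    and prio :: "nat list" and choice :: "nat \<Rightarrow> nat"
  assumes distinct_prio: "distinct prio" and set_prio: "set prio = fst ` Gc"
begin

lemma selected_blues_subset: "set (selected_blues n eps rep prio choice r) \<subseteq> {b\<in>fst ` Gc. choice b = r}"
  unfolding selected_blues_def using sel_prefix_subset set_prio by fastforce

lemma distinct_selected_blues: "distinct (selected_blues n eps rep prio choice r)"
  unfolding selected_blues_def using distinct_prio by (intro distinct_sel_prefix) simp

lemma sum_list_filter_prio:
  "sum_list (map sz (filter P prio)) = (\<Sum>b\<in>{b\<in>fst ` Gc. P b}. sz b)"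
proof -
  have "set (filter P prio) = {b\<in>fst ` Gc. P b}" using set_prio by auto
  then show ?thesis using distinct_prio by (simp add: sum_list_distinct_conv_sum_set)
qed

lemma merged_labeling_eq_iff:
  assumes "r \<notin> fst ` Gc"
  shows "merged_labeling n eps rep Gc prio choice v = r
     \<longleftrightarrow> rep v = r \<or> rep v \<in> set (selected_blues n eps rep prio choice r)"
  using assms selected_blues_subset[of r] selected_blues_subset[of "choice (rep v)"]
  unfolding merged_labeling_def merged_blues_def by auto

lemma cl_merged_labeling:
  assumes "r \<notin> fst ` Gc"
  shows "cl n (merged_labeling n eps rep Gc prio choice) r
       = cl n rep r \<union> (\<Union>b\<in>set (selected_blues n eps rep prio choice r). cl n rep b)"
  unfolding cl_def using merged_labeling_eq_iff[OF assms] by auto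

lemma csize_merged_labeling:
  assumes r: "r \<notin> fst ` Gc"
  shows "real (csize n (merged_labeling n eps rep Gc prio choice) r) =
     real (csize n rep r) + sum_list (map (\<lambda>a. real (csize n rep a)) (selected_blues n eps rep prio choice r))"
proof -
  let ?S = "set (selected_blues n eps rep prio choice r)"
  have "r \<notin> ?S" using selected_blues_subset r by auto
  then have "cl n rep r \<inter> (\<Union>b\<in>?S. cl n rep b) = {}" unfolding cl_def by blast
  then have "card (cl n (merged_labeling n eps rep Gc prio choice) r)
      = card (cl n rep r) + card (\<Union>b\<in>?S. cl n rep b)"
    unfolding cl_merged_labeling[OF r] by (intro card_Un_disjoint) (auto simp: finite_cl)
  also have "card (\<Union>b\<in>?S. cl n rep b) = (\<Sum>b\<in>?S. card (cl n rep b))"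
    by (intro card_UN_disjoint) (auto simp: finite_cl cl_disjoint)
  finally show ?thesis
    using distinct_selected_blues[of r] unfolding csize_def by (simp add: sum_list_distinct_conv_sum_set)
qed

lemma crowded_outgrows:
  assumes "0 \<le> eps" "r \<notin> fst ` Gc" "cl n rep0 r \<subseteq> cl n rep r" "crowded n eps rep Gc b choice r"
  shows "(1 + eps) * real (csize n rep0 r) < real (csize n (merged_labeling n eps rep Gc prio choice) r)"
proof -
  let ?sz = "\<lambda>a. real (csize n rep a)"
  have "eps * ?sz r < (\<Sum>b'\<in>{b'\<in>fst ` Gc. choice b' = r}. ?sz b')"
    using assms(4) unfolding crowded_def
    by (rule order_less_le_trans, intro sum_mono2) (auto simp flip: set_prio)
  then have "eps * ?sz r < 0 + sum_list (map ?sz (filter (\<lambda>b. choice b = r) prio))"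
    by (simp add: sum_list_filter_prio)
  then have "eps * ?sz r < sum_list (map ?sz (selected_blues n eps rep prio choice r))"
    unfolding selected_blues_def using sel_prefix_exceeds by fastforce
  moreover have "csize n rep0 r \<le> csize n rep r"
    unfolding csize_def using assms(3) by (intro card_mono) (auto simp: finite_cl)
  then have "(1 + eps) * real (csize n rep0 r) \<le> (1 + eps) * ?sz r"
    using assms(1) by (intro mult_left_mono) auto
  ultimately show ?thesis
    using csize_merged_labeling[OF assms(2)] by (simp add: algebra_simps)
qed

lemma proposal_crowded_if_not_merged:
  assumes "b \<in> fst ` Gc" "b \<notin> merged_blues n eps rep Gc prio choice"
  shows "crowded n eps rep Gc b choice (choice b)"
proof -
  let ?sz = "\<lambda>a. real (csize n rep a)"
  let ?sel = "selected_blues n eps rep prio choice (choice b)"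
  have "b \<notin> set ?sel" using assms unfolding merged_blues_def by auto
  moreover have "b \<in> set (filter (\<lambda>b'. choice b' = choice b) prio)" using assms(1) set_prio by auto
  ultimately have "eps * ?sz (choice b) < 0 + sum_list (map ?sz ?sel)"
    unfolding selected_blues_def by (intro sel_prefix_exceeds_if_not_selected)
  also have "\<dots> = (\<Sum>b'\<in>set ?sel. ?sz b')"
    using distinct_selected_blues by (simp add: sum_list_distinct_conv_sum_set)
  also have "\<dots> \<le> (\<Sum>b'\<in>{b'\<in>fst ` Gc - {b}. choice b' = choice b}. ?sz b')"
    using selected_blues_subset[of "choice b"] \<open>b \<notin> set ?sel\<close>
    by (intro sum_mono2) (auto simp flip: set_prio)
  finally show ?thesis unfolding crowded_def .
qed

lemma card_next_Gc_row_le: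
  assumes "0 \<le> eps" "finite Gc" "b \<in> fst ` Gc"
    and blue_red: "\<forall>(b', r)\<in>Gc. \<not> col b' \<and> col r"
    and red_grow: "\<forall>r. col r \<longrightarrow> cl n rep0 r \<subseteq> cl n rep r"
  shows "card {r. (b, r) \<in> next_Gc n w T eps (csize n rep0) rep Gc prio choice}
     \<le> (if crowded n eps rep Gc b choice (choice b)
         then card {r\<in>{r. (b, r) \<in> Gc}. \<not> crowded n eps rep Gc b choice r} else 0)"
proof (cases "b \<in> merged_blues n eps rep Gc prio choice")
  case True
  then have "{r. (b, r) \<in> next_Gc n w T eps (csize n rep0) rep Gc prio choice} = {}"
    unfolding next_Gc_def by blast
  then show ?thesis by simp
next
  case False
  have "{r. (b, r) \<in> next_Gc n w T eps (csize n rep0) rep Gc prio choice}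
      \<subseteq> {r\<in>{r. (b, r) \<in> Gc}. \<not> crowded n eps rep Gc b choice r}"
  proof
    fix r assume "r \<in> {r. (b, r) \<in> next_Gc n w T eps (csize n rep0) rep Gc prio choice}"
    then have "(b, r) \<in> Gc"
      and small: "real (csize n (merged_labeling n eps rep Gc prio choice) r) \<le> (1 + eps) * real (csize n rep0 r)"
      unfolding next_Gc_def by blast+
    then have "col r" using blue_red by fast
    then have "r \<notin> fst ` Gc" "cl n rep0 r \<subseteq> cl n rep r" using blue_red red_grow by auto
    have "\<not> crowded n eps rep Gc b choice r"
    proof
      assume "crowded n eps rep Gc b choice r"
      from crowded_outgrows[OF assms(1) \<open>r \<notin> fst ` Gc\<close> \<open>cl n rep0 r \<subseteq> cl n rep r\<close> this] small
      show False by linarith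
    qed
    with \<open>(b, r) \<in> Gc\<close> show "r \<in> {r\<in>{r. (b, r) \<in> Gc}. \<not> crowded n eps rep Gc b choice r}" by simp
  qed
  moreover have "finite {r\<in>{r. (b, r) \<in> Gc}. \<not> crowded n eps rep Gc b choice r}"
    by (rule finite_subset[OF _ finite_row[OF assms(2)]]) blast
  ultimately have "card {r. (b, r) \<in> next_Gc n w T eps (csize n rep0) rep Gc prio choice}
      \<le> card {r\<in>{r. (b, r) \<in> Gc}. \<not> crowded n eps rep Gc b choice r}"
    by (rule card_mono[rotated])
  with proposal_crowded_if_not_merged[OF assms(3) False] show ?thesis by simp
qed

end

definition round_invariant :: "nat \<Rightarrow> labeling \<Rightarrow> (nat \<Rightarrow> bool) \<Rightarrow> cstate \<Rightarrow> bool" where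
  "round_invariant n rep0 col st \<longleftrightarrow>
     finite (snd st) \<and> (\<forall>(b, r)\<in>snd st. \<not> col b \<and> col r) \<and> (\<forall>r. col r \<longrightarrow> cl n rep0 r \<subseteq> cl n (fst st) r)"

lemma card_next_Gc_le:
  assumes "0 \<le> eps" "round_invariant n rep0 col (rep, Gc)" "distinct prio" "set prio = fst ` Gc"
  shows "card (next_Gc n w T eps (csize n rep0) rep Gc prio choice)
     \<le> (\<Sum>b\<in>fst ` Gc. if crowded n eps rep Gc b choice (choice b)
           then card {r\<in>{r. (b, r) \<in> Gc}. \<not> crowded n eps rep Gc b choice r} else 0)"
proof -
  have fin: "finite Gc" and inv: "\<forall>(b, r)\<in>Gc. \<not> col b \<and> col r" "\<forall>r. col r \<longrightarrow> cl n rep0 r \<subseteq> cl n rep r"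
    using assms(2) unfolding round_invariant_def by auto
  have "finite (next_Gc n w T eps (csize n rep0) rep Gc prio choice)"
    using next_Gc_subset fin by (rule finite_subset)
  moreover have "fst ` next_Gc n w T eps (csize n rep0) rep Gc prio choice \<subseteq> fst ` Gc"
    using next_Gc_subset by (rule image_mono)
  ultimately have "card (next_Gc n w T eps (csize n rep0) rep Gc prio choice)
      = (\<Sum>b\<in>fst ` Gc. card {r. (b, r) \<in> next_Gc n w T eps (csize n rep0) rep Gc prio choice})"
    using fin by (intro card_eq_sum_rows) simp_all
  also have "\<dots> \<le> (\<Sum>b\<in>fst ` Gc. if crowded n eps rep Gc b choice (choice b)
           then card {r\<in>{r. (b, r) \<in> Gc}. \<not> crowded n eps rep Gc b choice r} else 0)"
    by (intro sum_mono card_next_Gc_row_le[OF assms(3,4,1) fin _ inv])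
  finally show ?thesis .
qed

lemma nn_integral_card_next_Gc_le:
  assumes "0 \<le> eps" "round_invariant n rep0 col (rep, Gc)" "distinct prio" "set prio = fst ` Gc"
  shows "(\<integral>\<^sup>+choice. of_nat (card (next_Gc n w T eps (csize n rep0) rep Gc prio choice))
            \<partial>Pi_pmf (fst ` Gc) 0 (\<lambda>b. pmf_of_set {r. (b, r) \<in> Gc}))
         \<le> ennreal (real (card Gc) / 4)"
proof -
  let ?B = "fst ` Gc"
  let ?P = "Pi_pmf ?B 0 (\<lambda>b. pmf_of_set {r. (b, r) \<in> Gc})"
  let ?bound = "\<lambda>b choice. if crowded n eps rep Gc b choice (choice b)
                 then card {r\<in>{r. (b, r) \<in> Gc}. \<not> crowded n eps rep Gc b choice r} else 0"
  have fin: "finite Gc" using assms(2) unfolding round_invariant_def by simp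
  have "(of_nat (card (next_Gc n w T eps (csize n rep0) rep Gc prio choice)) :: ennreal)
      \<le> (\<Sum>b\<in>?B. of_nat (?bound b choice))" for choice
    unfolding of_nat_sum[symmetric] by (intro of_nat_mono card_next_Gc_le[OF assms])
  then have "(\<integral>\<^sup>+choice. of_nat (card (next_Gc n w T eps (csize n rep0) rep Gc prio choice)) \<partial>?P)
      \<le> (\<integral>\<^sup>+choice. (\<Sum>b\<in>?B. of_nat (?bound b choice)) \<partial>?P)"
    by (rule nn_integral_mono)
  also have "\<dots> = (\<Sum>b\<in>?B. \<integral>\<^sup>+choice. of_nat (?bound b choice) \<partial>?P)"
    by (intro nn_integral_sum) simp
  also have "\<dots> \<le> (\<Sum>b\<in>?B. ennreal (real (card {r. (b, r) \<in> Gc}) / 4))"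
  proof (rule sum_mono)
    fix b assume "b \<in> ?B"
    then have "{r. (b, r) \<in> Gc} \<noteq> {}" by force
    with \<open>b \<in> ?B\<close> fin finite_row[OF fin] show "(\<integral>\<^sup>+choice. of_nat (?bound b choice) \<partial>?P)
        \<le> ennreal (real (card {r. (b, r) \<in> Gc}) / 4)"
      by (intro nn_integral_Pi_pmf_hits_times_misses[where E = "crowded n eps rep Gc b"]) simp_all
  qed
  also have "\<dots> = ennreal (\<Sum>b\<in>?B. real (card {r. (b, r) \<in> Gc}) / 4)"
    by (rule sum_ennreal) simp
  also have "(\<Sum>b\<in>?B. real (card {r. (b, r) \<in> Gc}) / 4) = real (card Gc) / 4"
    unfolding card_eq_sum_rows[OF fin finite_imageI[OF fin] order_refl]
    by (simp add: sum_divide_distrib)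
  finally show ?thesis .
qed

lemma set_pmf_of_permutations_of_set:
  "finite A \<Longrightarrow> prio \<in> set_pmf (pmf_of_set (permutations_of_set A)) \<Longrightarrow> distinct prio \<and> set prio = A"
  by (simp add: permutations_of_setD)

lemma round_invariant_inner_step:
  assumes "round_invariant n rep0 col st" "st' \<in> set_pmf (inner_step n w T eps (csize n rep0) st)"
  shows "round_invariant n rep0 col st'"
proof -
  obtain rep Gc where st: "st = (rep, Gc)" by (cases st)
  have fin: "finite Gc" and blue_red: "\<forall>(b, r)\<in>Gc. \<not> col b \<and> col r"
    and red_grow: "\<forall>r. col r \<longrightarrow> cl n rep0 r \<subseteq> cl n rep r"
    using assms(1) unfolding st round_invariant_def by auto
  show ?thesis
  proof (cases "Gc = {}")
    case True
    then show ?thesis using assms unfolding st by (simp add: inner_step_def)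
  next
    case False
    with assms(2) obtain prio choice
      where "prio \<in> set_pmf (pmf_of_set (permutations_of_set (fst ` Gc)))"
        and st': "st' = (merged_labeling n eps rep Gc prio choice, next_Gc n w T eps (csize n rep0) rep Gc prio choice)"
      unfolding st inner_step_nonempty[OF False] by auto
    then have prio: "distinct prio" "set prio = fst ` Gc"
      using set_pmf_of_permutations_of_set[OF finite_imageI[OF fin]] by blast+
    have sub: "next_Gc n w T eps (csize n rep0) rep Gc prio choice \<subseteq> Gc"
      by (rule next_Gc_subset)
    then have "\<forall>(b, r)\<in>next_Gc n w T eps (csize n rep0) rep Gc prio choice. \<not> col b \<and> col r"
      using blue_red by auto
    moreover have "cl n rep0 r \<subseteq> cl n (merged_labeling n eps rep Gc prio choice) r" if "col r" for r
    proof -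
      have "r \<notin> fst ` Gc" using blue_red that by auto
      with red_grow that show ?thesis using cl_merged_labeling[OF prio] by blast
    qed
    ultimately show ?thesis
      unfolding round_invariant_def st' prod.sel using finite_subset[OF sub fin] by blast
  qed
qed

lemma nn_integral_card_inner_step_le:
  assumes "0 \<le> eps" "round_invariant n rep0 col st"
  shows "(\<integral>\<^sup>+st'. of_nat (card (snd st')) \<partial>inner_step n w T eps (csize n rep0) st)
         \<le> ennreal (real (card (snd st)) / 4)"
proof -
  obtain rep Gc where st: "st = (rep, Gc)" by (cases st)
  show ?thesis
  proof (cases "Gc = {}")
    case True
    then show ?thesis unfolding st by (simp add: inner_step_def)
  next
    case False
    let ?Perm = "pmf_of_set (permutations_of_set (fst ` Gc))"
    have "finite Gc" using assms(2) unfolding st round_invariant_def by simp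
    have "(\<integral>\<^sup>+st'. of_nat (card (snd st')) \<partial>inner_step n w T eps (csize n rep0) st)
        = (\<integral>\<^sup>+prio. \<integral>\<^sup>+choice. of_nat (card (next_Gc n w T eps (csize n rep0) rep Gc prio choice))
             \<partial>Pi_pmf (fst ` Gc) 0 (\<lambda>b. pmf_of_set {r. (b, r) \<in> Gc}) \<partial>?Perm)"
      unfolding st inner_step_nonempty[OF False] by simp
    also have "\<dots> \<le> (\<integral>\<^sup>+prio. ennreal (real (card Gc) / 4) \<partial>?Perm)"
      using assms set_pmf_of_permutations_of_set[of "fst ` Gc"] \<open>finite Gc\<close>
      by (intro nn_integral_mono_AE) (auto simp: AE_measure_pmf_iff st intro!: nn_integral_card_next_Gc_le)
    finally show ?thesis unfolding st by simp
  qed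
qed

lemma round_invariant_inner_iter:
  "round_invariant n rep0 col st \<Longrightarrow> st' \<in> set_pmf (inner_iter n w T eps (csize n rep0) m st) \<Longrightarrow>
   round_invariant n rep0 col st'"
  by (induction m arbitrary: st) (auto dest: round_invariant_inner_step)

lemma nn_integral_card_inner_iter_le:
  assumes "0 \<le> eps"
  shows "round_invariant n rep0 col st \<Longrightarrow>
    (\<integral>\<^sup>+st'. of_nat (card (snd st')) \<partial>inner_iter n w T eps (csize n rep0) m st)
       \<le> ennreal (real (card (snd st)) * (1/4)^m)"
proof (induction m arbitrary: st)
  case 0
  then show ?case by (simp add: ennreal_of_nat_eq_real_of_nat)
next
  case (Suc m)
  let ?S = "inner_step n w T eps (csize n rep0) st"
  have "(\<integral>\<^sup>+st'. of_nat (card (snd st')) \<partial>inner_iter n w T eps (csize n rep0) (Suc m) st)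
      = (\<integral>\<^sup>+s. (\<integral>\<^sup>+st'. of_nat (card (snd st')) \<partial>inner_iter n w T eps (csize n rep0) m s) \<partial>?S)"
    by simp
  also have "\<dots> \<le> (\<integral>\<^sup>+s. of_nat (card (snd s)) * ennreal ((1/4)^m) \<partial>?S)"
    using Suc round_invariant_inner_step[OF Suc.prems]
    by (intro nn_integral_mono_AE)
       (auto simp: AE_measure_pmf_iff ennreal_mult ennreal_of_nat_eq_real_of_nat)
  also have "\<dots> = (\<integral>\<^sup>+s. of_nat (card (snd s)) \<partial>?S) * ennreal ((1/4)^m)"
    by (rule nn_integral_multc) simp
  also have "\<dots> \<le> ennreal (real (card (snd st)) / 4) * ennreal ((1/4)^m)"
    by (intro mult_right_mono nn_integral_card_inner_step_le[OF assms Suc.prems]) simp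
  also have "\<dots> = ennreal (real (card (snd st)) * (1/4)^Suc m)"
    by (simp add: ennreal_mult[symmetric])
  finally show ?case .
qed

lemma Gc0_subset: "Gc0 n w rep T col \<subseteq> rep ` {..<n} \<times> rep ` {..<n}"
  unfolding Gc0_def H_edge_def cl_def by auto

lemma card_Gc0_le: "card (Gc0 n w rep T col) \<le> n * n"
proof -
  have "card (Gc0 n w rep T col) \<le> card (rep ` {..<n} \<times> rep ` {..<n})"
    by (intro card_mono Gc0_subset) simp
  also have "\<dots> \<le> n * n"
    using card_image_le[of "{..<n}" rep] by (simp add: card_cartesian_product mult_mono)
  finally show ?thesis .
qed

lemma round_invariant_Gc0: "round_invariant n rep col (rep, Gc0 n w rep T col)"
  using finite_subset[OF Gc0_subset] unfolding round_invariant_def by (auto simp: Gc0_def)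

lemma more_than_inner_rounds_le:
  assumes "0 \<le> eps"
  shows "more_than_inner_rounds n w T eps rep m \<le> real (n * n) * (1/4)^m"
proof -
  let ?c = "ennreal (real (n * n) * (1/4)^m)"
  let ?X = "{st :: cstate. snd st \<noteq> {}}"
  have bound: "emeasure (measure_pmf (inner_iter n w T eps (csize n rep) m (rep, Gc0 n w rep T col))) ?X \<le> ?c"
    for col
  proof -
    let ?M = "inner_iter n w T eps (csize n rep) m (rep, Gc0 n w rep T col)"
    have "emeasure (measure_pmf ?M) ?X = (\<integral>\<^sup>+st. indicator ?X st \<partial>?M)"
      by simp
    also have "\<dots> \<le> (\<integral>\<^sup>+st. of_nat (card (snd st)) \<partial>?M)"
      using round_invariant_inner_iter[OF round_invariant_Gc0]
      by (intro nn_integral_mono_AE)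
         (auto simp: AE_measure_pmf_iff round_invariant_def indicator_def Suc_le_eq card_gt_0_iff)
    also have "\<dots> \<le> ennreal (real (card (Gc0 n w rep T col)) * (1/4)^m)"
      using nn_integral_card_inner_iter_le[OF assms round_invariant_Gc0] by simp
    also have "\<dots> \<le> ?c"
      using card_Gc0_le[of n w rep T col]
      by (intro ennreal_leI mult_right_mono) (simp_all del: of_nat_mult)
    finally show ?thesis .
  qed
  have "emeasure (measure_pmf (outer_round_after n w T eps rep m)) ?X
      = (\<integral>\<^sup>+col. emeasure (measure_pmf (inner_iter n w T eps (csize n rep) m (rep, Gc0 n w rep T col))) ?X
           \<partial>colouring n w rep)"
    unfolding outer_round_after_def by simp
  also have "\<dots> \<le> (\<integral>\<^sup>+col. ?c \<partial>colouring n w rep)"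
    by (intro nn_integral_mono bound)
  finally show ?thesis
    unfolding more_than_inner_rounds_def by (simp add: measure_pmf.emeasure_eq_measure ennreal_le_iff)
qed

lemma sq_mult_quarter_pow_log_le:
  fixes k :: real
  shows "real (n * n) * (1/4) ^ nat \<lfloor>(\<bar>k\<bar> + 4) / ln 4 * ln (real n)\<rfloor> \<le> real n powr (- k)"
proof (cases "n \<le> 1")
  case True
  then consider "n = 0" | "n = 1" by linarith
  then show ?thesis by cases simp_all
next
  case False
  define L where "L = ln (real n)"
  define m where "m = nat \<lfloor>(\<bar>k\<bar> + 4) / ln 4 * L\<rfloor>"
  have ln4: "ln (4::real) = 2 * ln 2"
    using ln_realpow[of 2 2] by simp
  have "ln 2 \<le> L" "0 < real n" unfolding L_def using False by simp_all
  then have "0 < L" using ln_gt_zero[of 2] by linarith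
  have "(\<bar>k\<bar> + 4) / ln 4 * L - 1 \<le> real m"
    unfolding m_def using \<open>0 < L\<close> by (simp add: ln4)
  then have "(\<bar>k\<bar> + 4) * L - ln 4 \<le> real m * ln 4"
    using ln4 by (simp add: field_simps)
  moreover have "k * L \<le> \<bar>k\<bar> * L" using \<open>0 < L\<close> by (intro mult_right_mono) auto
  ultimately have key: "2 * L - real m * ln 4 \<le> - k * L"
    using \<open>ln 2 \<le> L\<close> ln4 by (simp add: algebra_simps)
  have "real (n * n) = exp (2 * L)"
    unfolding L_def mult_2 exp_add using \<open>0 < real n\<close> by simp
  moreover have "(1/4::real) ^ m = exp (- (real m * ln 4))"
    by (simp add: exp_minus exp_of_nat_mult power_one_over inverse_eq_divide)
  ultimately have "real (n * n) * (1/4) ^ m = exp (2 * L - real m * ln 4)"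
    by (simp add: exp_add[symmetric])
  also have "\<dots> \<le> exp (- k * L)" using key by simp
  also have "\<dots> = real n powr (- k)" unfolding L_def using \<open>0 < real n\<close> by (simp add: powr_def)
  finally show ?thesis unfolding m_def L_def .
qed

theorem mainTheorem6:
  fixes eps :: real
  assumes "eps > 0"
  shows "\<forall>k::real. \<exists>C>0. \<forall>(n::nat) (w::nat \<Rightarrow> nat \<Rightarrow> real) (rep::labeling) (T::real).
           (\<forall>x<n. \<forall>y<n. w x y \<ge> 0 \<and> w x y = w y x) \<and> (\<forall>x<n. w x x = 0)
           \<and> (\<exists>a c. H_edge n w rep a c \<and> W n w rep a c \<ge> T)
           \<longrightarrow> more_than_inner_rounds n w T eps rep (nat \<lfloor>C * ln (real n)\<rfloor>) \<le> real n powr (- k)"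
proof (intro allI)
  fix k :: real
  define C where "C = (\<bar>k\<bar> + 4) / ln (4::real)"
  have "C > 0" unfolding C_def by (simp add: add_nonneg_pos)
  (* the bound holds for every weight function and threshold *)
  moreover have "more_than_inner_rounds n w T eps rep (nat \<lfloor>C * ln (real n)\<rfloor>) \<le> real n powr (- k)"
    for n w rep T
    using more_than_inner_rounds_le[of eps] sq_mult_quarter_pow_log_le[of n k] assms
    unfolding C_def by (meson less_imp_le order_trans)
  ultimately show "\<exists>C>0. \<forall>(n::nat) (w::nat \<Rightarrow> nat \<Rightarrow> real) (rep::labeling) (T::real).
           (\<forall>x<n. \<forall>y<n. w x y \<ge> 0 \<and> w x y = w y x) \<and> (\<forall>x<n. w x x = 0)
           \<and> (\<exists>a c. H_edge n w rep a c \<and> W n w rep a c \<ge> T)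
           \<longrightarrow> more_than_inner_rounds n w T eps rep (nat \<lfloor>C * ln (real n)\<rfloor>) \<le> real n powr (- k)"
    by blast
qed

end
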